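(* Let $I\subseteq\mathbb R$ be an interval, $\lambda$ a positive measure on $(I\times\mathbb R^d,\mathcal B(I\times\mathbb R^d))$, $p\in[1,\infty)$, and for each $l\in\mathbb N$ let $G^{(l)}:(I\times\mathbb R^d)^2\to[0,\infty)$ be measurable with $G^{(l)}(t,x;s,y)=0$ whenever $s>t$. Let $f\in L^\infty_I$ be positive and assume $\theta:=\sup_{(t,x)\in I\times\mathbb R^d}\sum_{l=1}^\infty\big(\int_I\int_{\mathbb R^d}G^{(l)}(t,x;s,y)\lambda(ds,dy)\big)^{1/p}<\infty$. Let $\gamma\in(0,1)$ and let $v\ge0$ be a function with $v\in L^\infty_{I_T}$ for every $T\in I$ satisfying $v(t,x)\le f(t,x)+\big(\sum_{l=1}^\infty\int_I\int_{\mathbb R^d}G^{(l)}(t,x;s,y)v(s,y)^{p\gamma}\lambda(ds,dy)\big)^{1/p}$ for all $(t,x)\in I\times\mathbb R^d$. Then $v\in L^\infty_I$ and $\|v\|_{L^\infty_I}\le a$, where $a$ is the unique strictly positive solution of $a-\|f\|_{L^\infty_I}-\theta a^\gamma=0$.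
   Context: $I_T:=I\cap(-\infty,T]$. For $J\subseteq I$, $L^\infty_J$ is the space of measurable $f:J\times\mathbb R^d\to\mathbb R$ with $\|f\|_{L^\infty_J}:=\sup_{(t,x)\in J\times\mathbb R^d}|f(t,x)|<\infty$. "Positive" means $\ge0$. *)

theory Defs
  imports "HOL-Analysis.Analysis"
begin

definition Linf :: "real set \<Rightarrow> (real \<times> (real^'d) \<Rightarrow> real) \<Rightarrow> bool" where
  "Linf J f \<longleftrightarrow> f \<in> borel_measurable (restrict_space borel (J \<times> UNIV))
                 \<and> bounded (f ` (J \<times> UNIV))"

definition Linf_norm :: "real set \<Rightarrow> (real \<times> (real^'d) \<Rightarrow> real) \<Rightarrow> real" where
  "Linf_norm J f = (SUP z\<in>J \<times> UNIV. \<bar>f z\<bar>)"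

definition enn_root :: "real \<Rightarrow> ennreal \<Rightarrow> ennreal" where
  "enn_root p u = (if u = \<infinity> then \<infinity> else ennreal (enn2real u powr (1 / p)))"

end

theory Submission
  imports Defs
begin

text \<open>
  For T in I let M(T) be the sup-norm of v on the truncated slab I_T = I \<inter> (-\<infinity>,T].
  Causality of the kernels means that the right-hand side of the inequality at a point
  (t,x) with t \<le> T only sees values of v on I_T, where v \<le> M(T); together with the
  embedding of sequences, sum y_l^p \<le> (sum y_l)^p for p \<ge> 1, this gives the scalar
  inequality M(T) \<le> \<parallel>f\<parallel> + \<theta> M(T)^\<gamma>.  Since \<gamma> < 1, any such number lies below every
  positive root a of a - \<parallel>f\<parallel> - \<theta> a^\<gamma> = 0, uniformly in T; the sup over I is then
  bounded by a as well, and measurability on I is glued from countably many slabs.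
\<close>

lemma powr_sublinear_iff:
  fixes x c \<gamma> :: real
  assumes "0 < x"
  shows "c * x powr \<gamma> \<le> x \<longleftrightarrow> c \<le> x powr (1 - \<gamma>)"
    and "x \<le> c * x powr \<gamma> \<longleftrightarrow> x powr (1 - \<gamma>) \<le> c"
proof -
  have x: "x = x powr (1 - \<gamma>) * x powr \<gamma>" using assms by (simp add: powr_add[symmetric])
  have pos: "x powr \<gamma> > 0" using assms by simp
  show "c * x powr \<gamma> \<le> x \<longleftrightarrow> c \<le> x powr (1 - \<gamma>)"
    by (subst (2) x) (use pos in simp)
  show "x \<le> c * x powr \<gamma> \<longleftrightarrow> x powr (1 - \<gamma>) \<le> c"
    by (subst (1) x) (use pos in simp)
qed

text \<open>Comparison principle: a number obeying M \<le> F + \<theta> M^\<gamma> is bounded by every positive root of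
  a - F - \<theta> a^\<gamma> = 0.  Writing M = r a with r > 1 would give a(r - r^\<gamma>) + F(r^\<gamma> - 1) \<le> 0.\<close>
lemma sublinear_le_root:
  fixes F \<theta> \<gamma> M a :: real
  assumes F: "0 \<le> F" and \<gamma>: "0 \<le> \<gamma>" "\<gamma> < 1"
    and M: "M \<le> F + \<theta> * M powr \<gamma>"
    and a: "a > 0" "a - F - \<theta> * a powr \<gamma> = 0"
  shows "M \<le> a"
proof (rule ccontr)
  assume "\<not> M \<le> a"
  define r where "r = M / a"
  have r1: "r > 1" and Mr: "M = r * a" using \<open>\<not> M \<le> a\<close> a by (auto simp: r_def)
  have "\<theta> * M powr \<gamma> = r powr \<gamma> * (\<theta> * a powr \<gamma>)"
    using Mr r1 a by (simp add: powr_mult)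
  also have "\<theta> * a powr \<gamma> = a - F" using a by simp
  finally have "r * a \<le> F + r powr \<gamma> * (a - F)" using M Mr by simp
  then have bound: "a * (r - r powr \<gamma>) + F * (r powr \<gamma> - 1) \<le> 0" by (simp add: algebra_simps)
  have "r powr \<gamma> < r powr 1" using r1 \<gamma> by (simp only: powr_less_cancel_iff)
  then have "a * (r - r powr \<gamma>) > 0" using a r1 by simp
  moreover have "F * (r powr \<gamma> - 1) \<ge> 0"
    using F r1 \<gamma> by (simp add: ge_one_powr_ge_zero)
  ultimately show False using bound by linarith
qed

text \<open>The sublinear equation has a positive root unless F = \<theta> = 0 (intermediate value theorem
  between a small point where the left side is negative and a large point where it is positive).\<close>
lemma sublinear_root_exists:
  fixes F \<theta> \<gamma> :: real
  assumes F: "0 \<le> F" and \<theta>: "0 \<le> \<theta>" and \<gamma>: "0 < \<gamma>" "\<gamma> < 1"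
    and nontrivial: "F > 0 \<or> \<theta> > 0"
  shows "\<exists>a. a > 0 \<and> a - F - \<theta> * a powr \<gamma> = 0"
proof -
  define \<phi> where "\<phi> m = m - F - \<theta> * m powr \<gamma>" for m
  define b where "b = max 1 (max (2 * F) ((2 * \<theta>) powr (1 / (1 - \<gamma>))))"
  have b1: "1 \<le> b" by (simp add: b_def)
  have "(2 * \<theta>) * b powr \<gamma> \<le> b"
  proof (cases "\<theta> = 0")
    case False
    then have "2 * \<theta> = ((2 * \<theta>) powr (1 / (1 - \<gamma>))) powr (1 - \<gamma>)"
      using \<theta> \<gamma> by (simp add: powr_powr)
    also have "\<dots> \<le> b powr (1 - \<gamma>)"
      using \<gamma> by (intro powr_mono2) (auto simp: b_def)
    finally show ?thesis using b1 by (simp add: powr_sublinear_iff)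
  qed (use b1 in simp)
  then have b_upper: "\<phi> b \<ge> 0" by (simp add: \<phi>_def b_def)
  obtain e where e: "0 < e" "e \<le> b" "\<phi> e \<le> 0"
  proof (cases "F > 0")
    case True
    have "\<theta> * min 1 (F / 2) powr \<gamma> \<ge> 0" using \<theta> by simp
    then have "\<phi> (min 1 (F / 2)) \<le> 0" using True by (simp add: \<phi>_def)
    then show ?thesis using True b1 by (intro that[of "min 1 (F / 2)"]) auto
  next
    case False
    then have F0: "F = 0" and \<theta>0: "\<theta> > 0" using F nontrivial by auto
    define e where "e = min 1 (\<theta> powr (1 / (1 - \<gamma>)) / 2)"
    have e0: "e > 0" using \<theta>0 by (simp add: e_def)
    have "e \<le> \<theta> powr (1 / (1 - \<gamma>))"
      using powr_gt_zero[of \<theta> "1 / (1 - \<gamma>)"] \<theta>0 unfolding e_def by linarith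
    then have "e powr (1 - \<gamma>) \<le> (\<theta> powr (1 / (1 - \<gamma>))) powr (1 - \<gamma>)"
      using e0 \<gamma> by (intro powr_mono2) auto
    also have "\<dots> = \<theta>" using \<gamma> \<theta>0 by (simp add: powr_powr)
    finally have "e \<le> \<theta> * e powr \<gamma>" using e0 by (simp add: powr_sublinear_iff)
    then show ?thesis using e0 b1 F0 by (intro that[of e]) (auto simp: \<phi>_def e_def)
  qed
  have "continuous_on {e..b} \<phi>"
    unfolding \<phi>_def using e by (intro continuous_intros) auto
  then obtain a where "a \<in> {e..b}" "\<phi> a = 0" using IVT'[of \<phi> e 0 b] e b_upper by auto
  then show ?thesis using e by (intro exI[of _ a]) (auto simp: \<phi>_def)
qed

text \<open>Uniqueness follows from applying the comparison principle to two roots in both directions.\<close>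
lemma sublinear_root_unique:
  fixes F \<theta> \<gamma> :: real
  assumes F: "0 \<le> F" and \<theta>: "0 \<le> \<theta>" and \<gamma>: "0 < \<gamma>" "\<gamma> < 1"
    and nontrivial: "F > 0 \<or> \<theta> > 0"
  shows "\<exists>!a. a > 0 \<and> a - F - \<theta> * a powr \<gamma> = 0"
proof -
  obtain a where a: "a > 0" "a - F - \<theta> * a powr \<gamma> = 0"
    using sublinear_root_exists[OF assms] by blast
  have "b = a" if b: "b > 0" "b - F - \<theta> * b powr \<gamma> = 0" for b
  proof -
    have "b \<le> a" using b a \<gamma> by (intro sublinear_le_root[OF F, of \<gamma> b \<theta> a]) auto
    moreover have "a \<le> b" using b a \<gamma> by (intro sublinear_le_root[OF F, of \<gamma> a \<theta> b]) auto
    ultimately show ?thesis by simp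
  qed
  then show ?thesis using a by blast
qed

text \<open>For p \<ge> 1 the series of p-th powers is dominated by the p-th power of the series
  (each y_l \<le> s, hence y_l^p \<le> y_l s^(p-1)).\<close>
lemma suminf_powr_le_powr_suminf:
  fixes y :: "nat \<Rightarrow> real" and p s :: real
  assumes p: "1 \<le> p" and y: "\<And>l. 0 \<le> y l" and s: "0 \<le> s"
    and sum: "(\<Sum>l. ennreal (y l)) = ennreal s"
  shows "(\<Sum>l. ennreal (y l powr p)) \<le> ennreal (s powr p)"
proof -
  have y_le_s: "y l \<le> s" for l
  proof -
    have "ennreal (y l) \<le> (\<Sum>l. ennreal (y l))"
      using sum_le_suminf[OF summableI, of "{l}" "\<lambda>l. ennreal (y l)"] by simp
    then show ?thesis using sum s by simp
  qed
  have term_le: "y l powr p \<le> y l * s powr (p - 1)" for l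
  proof (cases "y l = 0")
    case False
    then have "y l powr p = y l * y l powr (p - 1)" using y[of l] by (simp add: powr_mult_base)
    also have "\<dots> \<le> y l * s powr (p - 1)"
      using y[of l] p y_le_s[of l] by (intro mult_left_mono powr_mono2) auto
    finally show ?thesis .
  qed simp
  have "(\<Sum>l. ennreal (y l powr p)) \<le> (\<Sum>l. ennreal (y l) * ennreal (s powr (p - 1)))"
    using term_le y by (intro suminf_le summableI) (simp add: ennreal_mult[symmetric] ennreal_leI)
  also have "\<dots> = ennreal (s * s powr (p - 1))"
    using s by (simp add: sum ennreal_mult)
  also have "s * s powr (p - 1) = s powr p"
    using s p by (cases "s = 0") (simp_all add: powr_mult_base)
  finally show ?thesis .
qed

lemma enn_root_le_ennreal:
  assumes "u \<le> ennreal r" "0 \<le> r" "0 < p"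
  shows "enn_root p u \<le> ennreal (r powr (1 / p))"
proof -
  have "u \<noteq> \<infinity>" using assms(1) by (auto simp: top_unique)
  then show ?thesis
    using assms by (auto simp: enn_root_def intro!: ennreal_leI powr_mono2 enn2real_leI)
qed

lemma enn_root_series_bound:
  fixes X Y :: "nat \<Rightarrow> ennreal" and p s c :: real
  assumes p: "1 \<le> p" and c: "0 \<le> c" and s: "0 \<le> s"
    and sum_roots: "(\<Sum>l. enn_root p (X l)) = ennreal s"
    and Y: "\<And>l. Y l \<le> X l * ennreal c"
  shows "enn_root p (\<Sum>l. Y l) \<le> ennreal (s * c powr (1 / p))"
proof -
  define y where "y l = enn2real (X l) powr (1 / p)" for l
  have X_fin: "X l \<noteq> \<infinity>" for l
    using ennreal_suminf_lessD[of "\<lambda>l. enn_root p (X l)" \<infinity> l] sum_roots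
    by (auto simp: enn_root_def)
  have root_X: "enn_root p (X l) = ennreal (y l)" for l
    using X_fin[of l] by (simp add: enn_root_def y_def)
  have X_y: "X l = ennreal (y l powr p)" for l
    using X_fin[of l] p by (simp add: y_def powr_powr ennreal_enn2real_if)
  have "(\<Sum>l. Y l) \<le> (\<Sum>l. X l * ennreal c)" by (intro suminf_le summableI Y)
  also have "\<dots> = (\<Sum>l. ennreal (y l powr p)) * ennreal c"
    by (simp only: X_y ennreal_suminf_multc)
  also have "\<dots> \<le> ennreal (s powr p) * ennreal c"
    using sum_roots p s by (intro mult_right_mono suminf_powr_le_powr_suminf) (auto simp: y_def root_X)
  finally have "(\<Sum>l. Y l) \<le> ennreal (s powr p * c)" using c by (simp add: ennreal_mult)
  then have "enn_root p (\<Sum>l. Y l) \<le> ennreal ((s powr p * c) powr (1 / p))"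
    using s c p by (intro enn_root_le_ennreal) auto
  also have "(s powr p * c) powr (1 / p) = s * c powr (1 / p)"
    using s c p by (simp add: powr_mult powr_powr)
  finally show ?thesis .
qed

lemma interval_times_borel:
  fixes J :: "real set"
  assumes "is_interval J"
  shows "J \<times> (UNIV :: 'b::second_countable_topology set) \<in> sets (borel :: (real \<times> 'b) measure)"
proof -
  have "J \<times> (UNIV :: 'b set) \<in> sets (borel \<Otimes>\<^sub>M borel)"
    using real_interval_borel_measurable[OF assms] by (intro pair_measureI) auto
  then show ?thesis by (metis borel_prod)
qed

text \<open>Every real interval has a countable cofinal subset (its rationals, plus its maximum if any).\<close>
lemma countable_cofinal_subset:
  fixes I :: "real set"
  assumes "is_interval I"
  obtains D where "countable D" "D \<subseteq> I" "\<And>t. t \<in> I \<Longrightarrow> \<exists>T\<in>D. t \<le> T"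
proof
  define D where "D = (\<rat> \<inter> I) \<union> {t\<in>I. \<forall>s\<in>I. s \<le> t}"
  have "{t\<in>I. \<forall>s\<in>I. s \<le> t} \<subseteq> {Sup I}"
    by (auto intro!: cSup_eq_maximum[symmetric])
  then have "countable {t\<in>I. \<forall>s\<in>I. s \<le> t}" by (rule countable_subset) simp
  then show "countable D" unfolding D_def using countable_rat by blast
  show "D \<subseteq> I" by (auto simp: D_def)
  show "\<exists>T\<in>D. t \<le> T" if t: "t \<in> I" for t
  proof (cases "\<forall>s\<in>I. s \<le> t")
    case True then show ?thesis using t by (auto simp: D_def)
  next
    case False
    then obtain s where s: "s \<in> I" "t < s" by force
    obtain q where q: "q \<in> \<rat>" "t < q" "q < s" using Rats_dense_in_real[OF s(2)] by blast
    have "q \<in> I" using assms t s(1) q unfolding is_interval_1 by (meson less_imp_le)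
    then show ?thesis using q by (auto simp: D_def intro!: bexI[of _ q])
  qed
qed

text \<open>A function measurable on every truncated slab I_T is measurable on the whole slab,
  since countably many truncations already cover it.\<close>
lemma measurable_from_truncations:
  fixes I :: "real set" and v :: "real \<times> 'b::second_countable_topology \<Rightarrow> real"
  assumes I: "is_interval I"
    and v: "\<And>T. T \<in> I \<Longrightarrow> v \<in> borel_measurable (restrict_space borel ((I \<inter> {..T}) \<times> UNIV))"
  shows "v \<in> borel_measurable (restrict_space borel (I \<times> UNIV))"
proof -
  obtain D where D: "countable D" "D \<subseteq> I" "\<And>t. t \<in> I \<Longrightarrow> \<exists>T\<in>D. t \<le> T"
    using countable_cofinal_subset[OF I] by blast
  define C where "C = (\<lambda>T. (I \<inter> {..T}) \<times> (UNIV :: 'b set)) ` D"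
  have IB: "I \<times> (UNIV :: 'b set) \<in> sets borel" by (rule interval_times_borel[OF I])
  have TB: "(I \<inter> {..T}) \<times> (UNIV :: 'b set) \<in> sets borel" for T
    using I by (intro interval_times_borel) (simp add: is_interval_Int)
  show ?thesis
  proof (rule measurable_piecewise_restrict[of C])
    show "countable C" using D(1) by (simp add: C_def)
  next
    fix \<Omega> assume "\<Omega> \<in> C"
    then obtain T where T: "T \<in> D" "\<Omega> = (I \<inter> {..T}) \<times> UNIV" by (auto simp: C_def)
    have sub: "\<Omega> \<subseteq> I \<times> UNIV" using T by auto
    show "\<Omega> \<inter> space (restrict_space borel (I \<times> UNIV)) \<in> sets (restrict_space borel (I \<times> UNIV))"
      using T sub IB TB by (auto simp: sets_restrict_space_iff space_restrict_space Int_absorb2)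
    have "restrict_space (restrict_space borel (I \<times> UNIV)) \<Omega> = restrict_space borel \<Omega>"
      using sub IB TB[of T] T(2) by (simp add: restrict_restrict_space Int_absorb1)
    then show "v \<in> borel_measurable (restrict_space (restrict_space borel (I \<times> UNIV)) \<Omega>)"
      using v[of T] T D(2) by auto
  next
    show "space (restrict_space borel (I \<times> UNIV)) \<subseteq> \<Union>C"
      using D(3) by (fastforce simp: C_def space_restrict_space)
  qed
qed

lemma Linf_norm_upper:
  assumes "Linf J f" "z \<in> J \<times> UNIV"
  shows "\<bar>f z\<bar> \<le> Linf_norm J f"
proof -
  obtain B where "\<And>z. z \<in> J \<times> UNIV \<Longrightarrow> \<bar>f z\<bar> \<le> B"
    using assms(1) unfolding Linf_def bounded_iff by auto
  then show ?thesis unfolding Linf_norm_def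
    by (intro cSUP_upper[OF assms(2)] bdd_aboveI2) auto
qed

lemma Linf_norm_nonneg:
  assumes "Linf J f" "J \<noteq> {}"
  shows "0 \<le> Linf_norm J f"
proof -
  obtain t where "t \<in> J" using assms(2) by blast
  then have "\<bar>f (t, 0)\<bar> \<le> Linf_norm J f" by (intro Linf_norm_upper[OF assms(1)]) simp
  then show ?thesis by linarith
qed

lemma Linf_norm_least:
  assumes "J \<noteq> {}" "\<And>z. z \<in> J \<times> UNIV \<Longrightarrow> \<bar>f z\<bar> \<le> B"
  shows "Linf_norm J f \<le> B"
  unfolding Linf_norm_def using assms by (intro cSUP_least) auto

lemma Linf_from_truncations:
  fixes v :: "real \<times> (real^'d) \<Rightarrow> real"
  assumes I: "is_interval I"
    and loc: "\<And>T. T \<in> I \<Longrightarrow> Linf (I \<inter> {..T}) v"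
    and bound: "\<And>T. T \<in> I \<Longrightarrow> Linf_norm (I \<inter> {..T}) v \<le> B"
  shows "Linf I v" and "I \<noteq> {} \<Longrightarrow> Linf_norm I v \<le> B"
proof -
  have pointwise: "\<bar>v z\<bar> \<le> B" if z: "z \<in> I \<times> UNIV" for z
  proof -
    have "z \<in> (I \<inter> {..fst z}) \<times> UNIV" using z by auto
    then have "\<bar>v z\<bar> \<le> Linf_norm (I \<inter> {..fst z}) v"
      using loc z by (intro Linf_norm_upper) auto
    also have "\<dots> \<le> B" using bound z by auto
    finally show ?thesis .
  qed
  have "v \<in> borel_measurable (restrict_space borel (I \<times> UNIV))"
    using loc by (intro measurable_from_truncations[OF I]) (auto simp: Linf_def)
  moreover have "bounded (v ` (I \<times> UNIV))"
    using pointwise unfolding bounded_iff by auto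
  ultimately show "Linf I v" by (simp add: Linf_def)
  show "Linf_norm I v \<le> B" if "I \<noteq> {}"
    using that pointwise by (intro Linf_norm_least) auto
qed

lemma section_indicator_measurable:
  fixes g :: "'a::topological_space \<Rightarrow> 'b::topological_space \<Rightarrow> real"
  assumes g: "(\<lambda>(z, w). g z w) \<in> borel_measurable borel"
    and S: "S \<in> sets borel" and lam: "sets lam = sets borel"
  shows "(\<lambda>w. ennreal (g z w) * indicator S w) \<in> borel_measurable lam"
proof -
  have "(\<lambda>w. (z, w)) \<in> borel_measurable borel"
    by (intro borel_measurable_continuous_onI continuous_intros)
  from measurable_compose[OF this g]
  have "(\<lambda>w. g z w) \<in> borel_measurable borel" by simp
  then have "(\<lambda>w. ennreal (g z w) * indicator S w) \<in> borel_measurable borel"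
    using S by measurable
  then show ?thesis by (subst measurable_cong_sets[OF lam refl])
qed

lemma causal_weighted_integral_le:
  fixes g v :: "real \<times> 'b \<Rightarrow> real" and lam :: "(real \<times> 'b) measure"
  assumes g_meas: "(\<lambda>w. ennreal (g w) * indicator (I \<times> UNIV) w) \<in> borel_measurable lam"
    and g_nonneg: "\<And>s y. s \<in> I \<Longrightarrow> 0 \<le> g (s, y)"
    and g_causal: "\<And>s y. s \<in> I \<Longrightarrow> s > T \<Longrightarrow> g (s, y) = 0"
    and v_nonneg: "\<And>w. w \<in> (I \<inter> {..T}) \<times> UNIV \<Longrightarrow> 0 \<le> v w"
    and v_le: "\<And>w. w \<in> (I \<inter> {..T}) \<times> UNIV \<Longrightarrow> v w \<le> M"
    and q: "0 \<le> q"
  shows "(\<integral>\<^sup>+ w\<in>I \<times> UNIV. ennreal (g w * v w powr q) \<partial>lam)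
      \<le> (\<integral>\<^sup>+ w\<in>I \<times> UNIV. ennreal (g w) \<partial>lam) * ennreal (M powr q)"
proof -
  have "ennreal (g w * v w powr q) * indicator (I \<times> UNIV) w
      \<le> ennreal (g w) * indicator (I \<times> UNIV) w * ennreal (M powr q)" for w
  proof (cases w)
    case (Pair s y)
    show ?thesis
    proof (cases "s \<in> I \<and> s \<le> T")
      case True
      then have w: "w \<in> (I \<inter> {..T}) \<times> UNIV" using Pair by auto
      have "v w powr q \<le> M powr q" using v_nonneg[OF w] v_le[OF w] q by (intro powr_mono2)
      then have "g w * v w powr q \<le> g w * M powr q"
        using g_nonneg True Pair by (intro mult_left_mono) auto
      then show ?thesis using w g_nonneg True Pair by (simp add: ennreal_mult[symmetric] ennreal_leI)
    qed (use g_causal Pair in \<open>auto simp: indicator_def not_le\<close>)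
  qed
  then have "(\<integral>\<^sup>+ w\<in>I \<times> UNIV. ennreal (g w * v w powr q) \<partial>lam)
      \<le> (\<integral>\<^sup>+ w. ennreal (g w) * indicator (I \<times> UNIV) w * ennreal (M powr q) \<partial>lam)"
    by (intro nn_integral_mono)
  also have "\<dots> = (\<integral>\<^sup>+ w\<in>I \<times> UNIV. ennreal (g w) \<partial>lam) * ennreal (M powr q)"
    by (rule nn_integral_multc[OF g_meas])
  finally show ?thesis .
qed

lemma pointwise_recursive_bound:
  fixes I :: "real set" and lam :: "(real \<times> 'b::second_countable_topology) measure"
    and G :: "nat \<Rightarrow> real \<times> 'b \<Rightarrow> real \<times> 'b \<Rightarrow> real"
    and v :: "real \<times> 'b \<Rightarrow> real"
  assumes I: "is_interval I" and lam: "sets lam = sets borel" and p: "1 \<le> p" and \<gamma>: "0 \<le> \<gamma>"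
    and G_meas: "\<And>l. (\<lambda>(z, w). G l z w) \<in> borel_measurable borel"
    and G_nonneg: "\<And>l s y. s \<in> I \<Longrightarrow> 0 \<le> G l (t, x) (s, y)"
    and G_causal: "\<And>l s y. s \<in> I \<Longrightarrow> s > t \<Longrightarrow> G l (t, x) (s, y) = 0"
    and t: "t \<le> T" and s: "0 \<le> s"
    and series: "(\<Sum>l. enn_root p (\<integral>\<^sup>+ w\<in>I \<times> UNIV. ennreal (G l (t, x) w) \<partial>lam)) = ennreal s"
    and v_nonneg: "\<And>w. w \<in> I \<times> UNIV \<Longrightarrow> 0 \<le> v w"
    and v_le: "\<And>w. w \<in> (I \<inter> {..T}) \<times> UNIV \<Longrightarrow> v w \<le> M"
    and c_nonneg: "0 \<le> c"
    and v_ineq: "ennreal (v (t, x)) \<le> ennreal c +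
          enn_root p (\<Sum>l. \<integral>\<^sup>+ w\<in>I \<times> UNIV. ennreal (G l (t, x) w * v w powr (p * \<gamma>)) \<partial>lam)"
  shows "v (t, x) \<le> c + s * M powr \<gamma>"
proof -
  have IB: "I \<times> (UNIV :: 'b set) \<in> sets borel" by (rule interval_times_borel[OF I])
  have moment_le: "(\<integral>\<^sup>+ w\<in>I \<times> UNIV. ennreal (G l (t, x) w * v w powr (p * \<gamma>)) \<partial>lam)
      \<le> (\<integral>\<^sup>+ w\<in>I \<times> UNIV. ennreal (G l (t, x) w) \<partial>lam) * ennreal (M powr (p * \<gamma>))" for l
  proof (rule causal_weighted_integral_le[where T = T])
    show "(\<lambda>w. ennreal (G l (t, x) w) * indicator (I \<times> UNIV) w) \<in> borel_measurable lam"
      by (rule section_indicator_measurable[OF G_meas IB lam])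
    show "G l (t, x) (s', y) = 0" if "s' \<in> I" "s' > T" for s' y
      using G_causal[OF that(1)] t that(2) by simp
  qed (use G_nonneg v_nonneg v_le p \<gamma> in auto)
  have "enn_root p (\<Sum>l. \<integral>\<^sup>+ w\<in>I \<times> UNIV. ennreal (G l (t, x) w * v w powr (p * \<gamma>)) \<partial>lam)
      \<le> ennreal (s * (M powr (p * \<gamma>)) powr (1 / p))"
    by (rule enn_root_series_bound[OF p _ s series moment_le]) simp
  then have "ennreal (v (t, x)) \<le> ennreal c + ennreal (s * (M powr (p * \<gamma>)) powr (1 / p))"
    using v_ineq by (meson add_left_mono order_trans)
  also have "\<dots> = ennreal (c + s * M powr \<gamma>)"
    using c_nonneg s p by (simp add: powr_powr)
  finally have "ennreal (v (t, x)) \<le> ennreal (c + s * M powr \<gamma>)" .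
  moreover have "0 \<le> c + s * M powr \<gamma>" using c_nonneg s by simp
  ultimately show ?thesis using ennreal_le_iff by blast
qed

lemma truncated_norm_recursive_bound:
  fixes I :: "real set" and lam :: "(real \<times> (real^'d)) measure"
    and G :: "nat \<Rightarrow> real \<times> (real^'d) \<Rightarrow> real \<times> (real^'d) \<Rightarrow> real"
    and f v :: "real \<times> (real^'d) \<Rightarrow> real"
  assumes I: "is_interval I" and lam: "sets lam = sets borel" and p: "1 \<le> p" and \<gamma>: "0 \<le> \<gamma>"
    and \<theta>: "0 \<le> \<theta>"
    and G_meas: "\<And>l. (\<lambda>(z, w). G l z w) \<in> borel_measurable borel"
    and G_nonneg: "\<And>l t x s y. t \<in> I \<Longrightarrow> s \<in> I \<Longrightarrow> 0 \<le> G l (t, x) (s, y)"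
    and G_causal: "\<And>l t x s y. t \<in> I \<Longrightarrow> s \<in> I \<Longrightarrow> s > t \<Longrightarrow> G l (t, x) (s, y) = 0"
    and f_pos: "\<And>z. z \<in> I \<times> UNIV \<Longrightarrow> 0 \<le> f z"
    and f_le: "\<And>z. z \<in> I \<times> UNIV \<Longrightarrow> f z \<le> F"
    and series_le: "\<And>z. z \<in> I \<times> UNIV \<Longrightarrow>
        (\<Sum>l. enn_root p (\<integral>\<^sup>+ w\<in>I \<times> UNIV. ennreal (G l z w) \<partial>lam)) \<le> ennreal \<theta>"
    and v_nonneg: "\<And>z. z \<in> I \<times> UNIV \<Longrightarrow> 0 \<le> v z"
    and T: "T \<in> I" and v_T: "Linf (I \<inter> {..T}) v"
    and v_ineq: "\<And>z. z \<in> I \<times> UNIV \<Longrightarrow>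
        ennreal (v z) \<le> ennreal (f z) +
          enn_root p (\<Sum>l. \<integral>\<^sup>+ w\<in>I \<times> UNIV. ennreal (G l z w * v w powr (p * \<gamma>)) \<partial>lam)"
  shows "Linf_norm (I \<inter> {..T}) v \<le> F + \<theta> * Linf_norm (I \<inter> {..T}) v powr \<gamma>"
proof -
  define M where "M = Linf_norm (I \<inter> {..T}) v"
  have v_le: "v w \<le> M" if "w \<in> (I \<inter> {..T}) \<times> UNIV" for w
    using Linf_norm_upper[OF v_T that] unfolding M_def by simp
  have "\<bar>v (t, x)\<bar> \<le> F + \<theta> * M powr \<gamma>" if t: "t \<in> I" "t \<le> T" for t x
  proof -
    have z: "(t, x) \<in> I \<times> UNIV" using t by simp
    define S where "S = (\<Sum>l. enn_root p (\<integral>\<^sup>+ w\<in>I \<times> UNIV. ennreal (G l (t, x) w) \<partial>lam))"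
    define s where "s = enn2real S"
    have "S \<le> ennreal \<theta>" unfolding S_def by (rule series_le[OF z])
    then have s: "0 \<le> s" "s \<le> \<theta>" "S = ennreal s"
      using enn2real_mono[of S "ennreal \<theta>"] \<theta> by (auto simp: s_def top_unique ennreal_enn2real_if)
    have "v (t, x) \<le> f (t, x) + s * M powr \<gamma>"
      by (rule pointwise_recursive_bound[OF I lam p \<gamma> G_meas G_nonneg[OF t(1)] G_causal[OF t(1)]
          t(2) s(1) s(3)[unfolded S_def] v_nonneg v_le f_pos[OF z] v_ineq[OF z]])
    also have "\<dots> \<le> F + \<theta> * M powr \<gamma>"
      using f_le[OF z] s by (intro add_mono mult_right_mono) auto
    finally show ?thesis using v_nonneg[OF z] by simp
  qed
  then show ?thesis unfolding M_def using T by (intro Linf_norm_least) auto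
qed

text \<open>Main theorem: v is measurable and bounded on I, and its norm is below the unique positive root
  of a - \<parallel>f\<parallel> - \<theta> a^\<gamma> = 0.  The bound on the truncated norms by a root for \<parallel>f\<parallel> + 1
  gives boundedness; the same argument with the root for \<parallel>f\<parallel> gives the norm estimate.\<close>
theorem mainTheorem13:
  fixes I :: "real set"
    and lam :: "(real \<times> (real^'d)) measure"
    and p \<gamma> :: real
    and G :: "nat \<Rightarrow> real \<times> (real^'d) \<Rightarrow> real \<times> (real^'d) \<Rightarrow> real"
    and f v :: "real \<times> (real^'d) \<Rightarrow> real"
  assumes I_int: "is_interval I" and I_ne: "I \<noteq> {}"
    and lam: "sets lam = sets borel"
    and p: "1 \<le> p"
    and G_meas: "\<And>l. (\<lambda>(z, w). G l z w) \<in> borel_measurable borel"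
    and G_nonneg: "\<And>l t x s y. t \<in> I \<Longrightarrow> s \<in> I \<Longrightarrow> 0 \<le> G l (t, x) (s, y)"
    and G_causal: "\<And>l t x s y. t \<in> I \<Longrightarrow> s \<in> I \<Longrightarrow> s > t \<Longrightarrow> G l (t, x) (s, y) = 0"
    and f_Linf: "Linf I f" and f_pos: "\<And>z. z \<in> I \<times> UNIV \<Longrightarrow> 0 \<le> f z"
    and theta_fin: "(SUP z\<in>I \<times> UNIV. (\<Sum>l. enn_root p (\<integral>\<^sup>+ w\<in>I \<times> UNIV. ennreal (G l z w) \<partial>lam))) < \<infinity>"
    and \<gamma>: "0 < \<gamma>" "\<gamma> < 1"
    and v_nonneg: "\<And>z. z \<in> I \<times> UNIV \<Longrightarrow> 0 \<le> v z"
    and v_loc: "\<And>T. T \<in> I \<Longrightarrow> Linf (I \<inter> {..T}) v"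
    and v_ineq: "\<And>z. z \<in> I \<times> UNIV \<Longrightarrow>
        ennreal (v z) \<le> ennreal (f z) +
          enn_root p (\<Sum>l. \<integral>\<^sup>+ w\<in>I \<times> UNIV. ennreal (G l z w * v w powr (p * \<gamma>)) \<partial>lam)"
  shows "Linf I v \<and>
    (let \<theta> = enn2real (SUP z\<in>I \<times> UNIV. (\<Sum>l. enn_root p (\<integral>\<^sup>+ w\<in>I \<times> UNIV. ennreal (G l z w) \<partial>lam)))
     in ((Linf_norm I f > 0 \<or> \<theta> > 0) \<longrightarrow>
           (\<exists>!a. a > 0 \<and> a - Linf_norm I f - \<theta> * a powr \<gamma> = 0))
      \<and> (\<forall>a. a > 0 \<and> a - Linf_norm I f - \<theta> * a powr \<gamma> = 0 \<longrightarrow> Linf_norm I v \<le> a))"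
proof -
  define \<Theta> where "\<Theta> = (SUP z\<in>I \<times> UNIV. (\<Sum>l. enn_root p (\<integral>\<^sup>+ w\<in>I \<times> UNIV. ennreal (G l z w) \<partial>lam)))"
  define \<theta> where "\<theta> = enn2real \<Theta>"
  define F where "F = Linf_norm I f"
  have \<theta>: "0 \<le> \<theta>" and \<Theta>: "\<Theta> = ennreal \<theta>"
    using theta_fin unfolding \<theta>_def \<Theta>_def[symmetric] by simp_all
  have F: "0 \<le> F" unfolding F_def by (rule Linf_norm_nonneg[OF f_Linf I_ne])
  have f_le: "f z \<le> F" if "z \<in> I \<times> UNIV" for z
    using Linf_norm_upper[OF f_Linf that] by (simp add: F_def)
  have series_le: "(\<Sum>l. enn_root p (\<integral>\<^sup>+ w\<in>I \<times> UNIV. ennreal (G l z w) \<partial>lam)) \<le> ennreal \<theta>"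
    if "z \<in> I \<times> UNIV" for z
    using SUP_upper[OF that] unfolding \<Theta>[symmetric] \<Theta>_def .
  have M_bound: "Linf_norm (I \<inter> {..T}) v \<le> F' + \<theta> * Linf_norm (I \<inter> {..T}) v powr \<gamma>"
    if "T \<in> I" "F \<le> F'" for T F'
    using \<gamma> that by (intro truncated_norm_recursive_bound[OF I_int lam p _ \<theta> G_meas G_nonneg G_causal
        f_pos _ series_le v_nonneg that(1) v_loc[OF that(1)] v_ineq] order_trans[OF f_le]) auto
  have M_le_root: "Linf_norm (I \<inter> {..T}) v \<le> a"
    if "T \<in> I" "a > 0" "a - F' - \<theta> * a powr \<gamma> = 0" "F \<le> F'" for T a F'
    using that F \<gamma> by (intro sublinear_le_root[OF _ _ _ M_bound]) auto
  obtain a1 where a1: "a1 > 0" "a1 - (F + 1) - \<theta> * a1 powr \<gamma> = 0"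
    using sublinear_root_exists[of "F + 1" \<theta> \<gamma>] F \<theta> \<gamma> by auto
  have "Linf I v"
    using M_le_root[OF _ a1] by (intro Linf_from_truncations[OF I_int v_loc]) auto
  moreover have "Linf_norm I v \<le> a" if "a > 0" "a - F - \<theta> * a powr \<gamma> = 0" for a
    using M_le_root[OF _ that] I_ne by (intro Linf_from_truncations(2)[OF I_int v_loc]) auto
  ultimately show ?thesis
    using sublinear_root_unique[OF F \<theta> \<gamma>]
    unfolding Let_def \<theta>_def[symmetric] \<Theta>_def[symmetric] F_def[symmetric] by blast
qed

end
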